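(* Let $c\ge\lceil n/2\rceil$ and let $\mathbf{s}_n\in\mathcal{B}(n,c,d_1)$ with $d_1=n-c$ and $add(\mathbf{s}_n)=t_1$. Suppose that for some integer $0<b<n$ the shifted sequence $R^b(\mathbf{s}_n)$ belongs to $\mathcal{B}(n,c,d_2)$ and $add(R^b(\mathbf{s}_n))=t_2\ge t_1$. If $d_1+d_2\le c+t_2+t_1+1$, then $b=d_2$.
   Context: All sequences are binary (entries in $\mathbb{Z}_2$), $\overline{x}=x\oplus1$, $x\bmod d$ is the least nonnegative residue, and $\mathbf{a}^q$ is the concatenation of $q$ copies of $\mathbf a$. For $\mathbf{s}_n=(s_0,\dots,s_{n-1})$, $\mathbf{s}_j=(s_0,\dots,s_{j-1})$. A length-$m$ sequence is periodic if it is the concatenation of $m/e$ copies of a length-$e$ sequence for a proper divisor $e$ of $m$, aperiodic otherwise. Right circular shift: $R^k(\mathbf{s}_n)=(s_{n-k},\dots,s_{n-1},s_0,\dots,s_{n-k-1})$. For $c\ge\lfloor n/2\rfloor$ and $1\le d\le\min\{n-c,\lfloor n/2\rfloor\}$, $\mathcal{B}(n,c,d)$ is the set of aperiodic length-$n$ sequences $\mathbf{s}_n$ with $\mathbf{s}_d$ aperiodic and $\mathbf{s}_{c+d}=(s_0,\dots,s_{d-1})^q(s_0,\dots,s_{r-1},\overline{s_r})$, where $q=\lfloor(c+d-1)/d\rfloor$, $r=c+d-1-qd$, and $s_{c+d},\dots,s_{n-1}$ are arbitrary. For $\mathbf{s}_n\in\mathcal{B}(n,c,d)$, $add(\mathbf{s}_n)$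 is the integer $t\ge0$ such that $s_{n-1-i}=s_{(d-1-i)\bmod d}$ for $0\le i<t$ and $s_{n-1-t}\neq s_{(d-1-t)\bmod d}$. *)

theory Defs
  imports Main
begin

text \<open>Binary sequences are lists of booleans (Z_2 with True = 1); complement is negation.
  Index i of a list xs is xs ! i.\<close>

definition periodic :: "bool list \<Rightarrow> bool" where
  "periodic xs \<longleftrightarrow> (\<exists>e. 0 < e \<and> e < length xs \<and> e dvd length xs \<and>
      xs = concat (replicate (length xs div e) (take e xs)))"

definition aperiodic :: "bool list \<Rightarrow> bool" where
  "aperiodic xs \<longleftrightarrow> \<not> periodic xs"

text \<open>The set B(n,c,d); the side conditions on c and d from the paper are part of membership.\<close>
definition Bset :: "nat \<Rightarrow> nat \<Rightarrow> nat \<Rightarrow> bool list set" where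
  "Bset n c d = {s. n div 2 \<le> c \<and> 1 \<le> d \<and> d \<le> min (n - c) (n div 2) \<and>
      length s = n \<and> aperiodic s \<and> aperiodic (take d s) \<and>
      (let q = (c + d - 1) div d; r = c + d - 1 - q * d in
        take (c + d) s = concat (replicate q (take d s)) @ take r s @ [\<not> s ! r])}"

text \<open>is_add d s t: t is the value add(s), the first position (counted from the end) at which
  s_{n-1-i} differs from s_{(d-1-i) mod d}, with mod the least nonnegative residue.\<close>
definition is_add :: "nat \<Rightarrow> bool list \<Rightarrow> nat \<Rightarrow> bool" where
  "is_add d s t \<longleftrightarrow> t < length s \<and>
     (\<forall>i<t. s ! (length s - 1 - i) = s ! nat ((int d - 1 - int i) mod int d)) \<and>
     s ! (length s - 1 - t) \<noteq> s ! nat ((int d - 1 - int t) mod int d)"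

definition rshift :: "nat \<Rightarrow> bool list \<Rightarrow> bool list" where
  "rshift k s = drop (length s - k) s @ take (length s - k) s"

end

theory Submission
  imports Defs
begin

(* Extend s to the n-periodic function f on the integers, take d1 s to the d1-periodic P and
   take d2 (R^b s) to the d2-periodic Q, the latter read in the coordinates of s. The
   hypotheses say that f agrees with P exactly on [-t1, n-2] and with Q exactly on
   [-b-t2, c+d2-2-b]. The argument tracks where a function changes over distance d2, i.e.
   where X i differs from X (i + d2): for m-periodic X this happens an even number of times in
   every window of length m. Changes of f are absent from the Q-window and agree with those of
   P on the P-window. If d2 < d1, P has no change-free run of length d1 - 1, since parity would
   make d2 a period of the primitive word take d1 s. Together with the bound on d1 + d2 this
   excludes every position of b except those where P has two change-free runs, and parity then
   forces these to be translates by exactly d1, which means b = d2. If d2 = d1, the same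
   parity count for f gives b = d2. *)

section \<open>Periodic functions on the integers\<close>

lemma periodic_add_mult:
  fixes h :: "int \<Rightarrow> 'a"
  assumes "\<forall>i. h i = h (i mod m)"
  shows "h (i + k * m) = h i"
  by (metis assms mod_mult_self1)

lemma shift_invariant_add_mult:
  fixes h :: "int \<Rightarrow> 'a"
  assumes shift: "\<And>i. h (i + p) = h i"
  shows "h (i + k * p) = h i"
proof (induction k arbitrary: i rule: int_induct[where k = 0])
  case base
  show ?case by simp
next
  case (step1 k)
  have "h (i + (k + 1) * p) = h ((i + p) + k * p)" by (simp add: algebra_simps)
  also have "\<dots> = h i" using step1.IH shift by simp
  finally show ?case .
next
  case (step2 k)
  have "h (i + (k - 1) * p) = h ((i - p) + k * p)" by (simp add: algebra_simps)
  also have "\<dots> = h (i - p + p)" using step2.IH shift by metis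
  finally show ?case by simp
qed

lemma sum_periodic_window:
  fixes g :: "int \<Rightarrow> 'a::comm_monoid_add"
  assumes m: "m > 0" and per: "\<forall>i. g i = g (i mod m)"
  shows "(\<Sum>i\<in>{a..<a+m}. g i) = (\<Sum>i\<in>{0..<m}. g i)"
proof (rule sum.reindex_bij_witness[where i = "\<lambda>j. a + (j - a) mod m" and j = "\<lambda>i. i mod m"])
  fix i assume "i \<in> {a..<a+m}"
  then have "(i - a) mod m = i - a" by simp
  moreover have "(i mod m - a) mod m = (i - a) mod m" by (simp add: mod_diff_left_eq)
  ultimately show "a + (i mod m - a) mod m = i" by simp
qed (use m per in \<open>auto simp: mod_add_right_eq\<close>)

lemma even_card_shift_changes:
  fixes X :: "int \<Rightarrow> bool"
  assumes m: "m > 0" and per: "\<forall>i. X i = X (i mod m)"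
  shows "even (card {i \<in> {a..<a+m}. X i \<noteq> X (i + r)})"
proof -
  let ?W = "{a..<a+m}" and ?N = "\<lambda>i. of_bool (X i) :: nat"
  have per_N: "\<forall>i. ?N i = ?N (i mod m)" using per by (simp flip: per[rule_format])
  have "(\<Sum>i\<in>?W. ?N (i + r)) = (\<Sum>i\<in>{a+r..<a+r+m}. ?N i)"
    by (rule sum.reindex_bij_witness[where i = "\<lambda>i. i - r" and j = "\<lambda>i. i + r"]) auto
  also have "\<dots> = (\<Sum>i\<in>?W. ?N i)"
    using sum_periodic_window[OF m per_N] by metis
  finally have shifted: "(\<Sum>i\<in>?W. ?N (i + r)) = (\<Sum>i\<in>?W. ?N i)" .
  have key: "\<And>i. of_bool (X i \<noteq> X (i + r)) + 2 * of_bool (X i \<and> X (i + r)) = ?N i + ?N (i + r)"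
    by auto
  have "(\<Sum>i\<in>?W. of_bool (X i \<noteq> X (i + r))) + 2 * (\<Sum>i\<in>?W. of_bool (X i \<and> X (i + r)))
      = (\<Sum>i\<in>?W. ?N i + ?N (i + r))"
    unfolding sum_distrib_left sum.distrib[symmetric] key ..
  also have "\<dots> = 2 * (\<Sum>i\<in>?W. ?N i)"
    by (simp add: sum.distrib shifted)
  finally have "even (\<Sum>i\<in>?W. of_bool (X i \<noteq> X (i + r)) :: nat)"
    by presburger
  then show ?thesis by (simp add: Int_def)
qed

lemma periodic_changes:
  fixes X :: "int \<Rightarrow> 'a"
  assumes per: "\<forall>i. X i = X (i mod m)"
  shows "\<forall>i. (X i \<noteq> X (i + r)) = (X (i mod m) \<noteq> X (i mod m + r))"
proof
  fix i
  have "X (i + r) = X (i mod m + r)"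
    using per by (metis mod_add_left_eq)
  then show "(X i \<noteq> X (i + r)) = (X (i mod m) \<noteq> X (i mod m + r))"
    using per by metis
qed

lemma shift_eq_if_eq_on_window_but_one:
  fixes X :: "int \<Rightarrow> bool"
  assumes m: "0 < m" and per: "\<forall>i. X i = X (i mod m)"
    and agree: "\<forall>i \<in> {a..<a+m} - {j}. X i = X (i + r)"
  shows "X k = X (k + r)"
proof -
  have at_j: "i = j" if "i \<in> {a..<a+m}" "X i \<noteq> X (i + r)" for i
  proof (rule ccontr)
    assume "i \<noteq> j"
    with that agree show False
      by blast
  qed
  have window: "X i = X (i + r)" if i: "a \<le> i" "i < a + m" for i
  proof (rule ccontr)
    assume change: "X i \<noteq> X (i + r)"
    have "i = j"
      using at_j i change by simp
    have "{i' \<in> {a..<a+m}. X i' \<noteq> X (i' + r)} = {j}"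
    proof
      show "{i' \<in> {a..<a+m}. X i' \<noteq> X (i' + r)} \<subseteq> {j}"
        using at_j by blast
      show "{j} \<subseteq> {i' \<in> {a..<a+m}. X i' \<noteq> X (i' + r)}"
        using \<open>i = j\<close> i change by simp
    qed
    then show False
      using even_card_shift_changes[OF m per, of a r] by simp
  qed
  define k' where "k' = a + (k - a) mod m"
  have "a \<le> k'" "k' < a + m"
    using m unfolding k'_def by auto
  then have "X k' = X (k' + r)"
    by (rule window)
  moreover have "k' mod m = k mod m"
    unfolding k'_def by (simp add: mod_add_right_eq)
  ultimately show ?thesis
    using per by (metis mod_add_left_eq)
qed

lemma two_zero_runs_in_period:
  fixes h :: "int \<Rightarrow> bool"
  assumes per: "\<forall>i. h i = h (i mod m)"
    and even: "\<And>a. even (card {i \<in> {a..<a+m}. h i})"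
    and zero1: "\<forall>i \<in> {a1..e1}. \<not> h i"
    and ends1: "h (a1 - 1)" "h (e1 + 1)" and run1: "a1 \<le> e1 + 1"
    and zero2: "\<forall>i \<in> {a2..e2}. \<not> h i"
    and ends2: "h (a2 - 1)" "h (e2 + 1)" and run2: "a2 \<le> e2 + 1"
    and window: "a1 \<le> a2" "a2 < a1 + m"
  shows "(a2 = a1 \<and> e2 = e1) \<or> (e1 - a1) + (e2 - a2) + 2 \<le> m - 4 \<or>
         ((e1 - a1) + (e2 - a2) + 2 = m - 2 \<and> a2 = e1 + 2)"
proof (cases "a2 = a1")
  case True
  have "\<not> e2 < e1"
    using zero1[rule_format, of "e2 + 1"] ends2(2) run2 True by force
  moreover have "\<not> e1 < e2"
    using zero2[rule_format, of "e1 + 1"] ends1(2) run1 True by force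
  ultimately show ?thesis
    using True by simp
next
  case False
  have gap1: "e1 + 2 \<le> a2"
    using zero1[rule_format, of "a2 - 1"] ends2(1) window False by force
  have "h (a1 - 1 + m)"
    using periodic_add_mult[OF per, of "a1 - 1" 1] ends1(1) by simp
  then have gap2: "e2 + 2 \<le> a1 + m"
    using zero2[rule_format, of "a1 - 1 + m"] window by force
  have three_ones: False
    if qr: "a1 - 1 < q" "q < r" "r < a1 - 1 + m" "h q" "h r"
      and rest: "\<And>i. a1 - 1 < i \<Longrightarrow> i < a1 - 1 + m \<Longrightarrow> i \<noteq> q \<Longrightarrow> i \<noteq> r \<Longrightarrow>
                   a1 \<le> i \<and> i \<le> e1 \<or> a2 \<le> i \<and> i \<le> e2" for q r
  proof -
    have "i \<in> {a1 - 1, q, r}" if "a1 - 1 \<le> i" "i < a1 - 1 + m" "h i" for i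
      using rest[of i] zero1[rule_format, of i] zero2[rule_format, of i] that by fastforce
    then have "{i \<in> {a1 - 1..<a1 - 1 + m}. h i} = {a1 - 1, q, r}"
      using qr ends1(1) by auto
    then show False
      using even[of "a1 - 1"] qr(1,2) by simp
  qed
  consider "(e1 - a1) + (e2 - a2) + 2 \<le> m - 4" | "a2 = e1 + 2" "e2 = a1 + m - 2"
    | "a2 = e1 + 3" "e2 = a1 + m - 2" | "a2 = e1 + 2" "e2 = a1 + m - 3"
    using gap1 gap2 by linarith
  then show ?thesis
  proof cases
    case 3
    then have False
      by (intro three_ones[of "e1 + 1" "e1 + 2"])
        (use ends1(2) ends2(1) run1 window in \<open>auto simp: add.commute\<close>)
    then show ?thesis ..
  next
    case 4
    then have False
      by (intro three_ones[of "e1 + 1" "a1 + m - 2"]) (use ends1(2) ends2(2) run1 run2 window in auto)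
    then show ?thesis ..
  qed auto
qed

lemma two_zero_runs:
  fixes h :: "int \<Rightarrow> bool"
  assumes m: "0 < m" and per: "\<forall>i. h i = h (i mod m)"
    and even: "\<And>a. even (card {i \<in> {a..<a+m}. h i})"
    and zero1: "\<forall>i \<in> {a1..e1}. \<not> h i"
    and ends1: "h (a1 - 1)" "h (e1 + 1)" and run1: "a1 \<le> e1 + 1"
    and zero2: "\<forall>i \<in> {a2..e2}. \<not> h i"
    and ends2: "h (a2 - 1)" "h (e2 + 1)" and run2: "a2 \<le> e2 + 1"
  shows "(\<exists>k. a2 = a1 + k * m \<and> e2 - a2 = e1 - a1) \<or> (e1 - a1) + (e2 - a2) + 2 \<le> m - 4 \<or>
         ((e1 - a1) + (e2 - a2) + 2 = m - 2 \<and> m dvd (a2 - e1 - 2))"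
proof -
  define k where "k = (a2 - a1) div m"
  have shift: "h (i + k * m) = h i" for i
    using per by (rule periodic_add_mult)
  have "a2 - k * m = a1 + (a2 - a1) mod m"
    unfolding k_def by (simp add: minus_div_mult_eq_mod [symmetric])
  then have window: "a1 \<le> a2 - k * m" "a2 - k * m < a1 + m"
    using m by auto
  have zero2': "\<forall>i \<in> {a2 - k * m..e2 - k * m}. \<not> h i"
  proof
    fix i
    assume "i \<in> {a2 - k * m..e2 - k * m}"
    then have "i + k * m \<in> {a2..e2}"
      by auto
    then show "\<not> h i"
      using zero2 shift[of i] by simp
  qed
  have ends2': "h (a2 - k * m - 1)" "h (e2 - k * m + 1)"
    using ends2 shift[of "a2 - k * m - 1"] shift[of "e2 - k * m + 1"]
    by (simp_all add: algebra_simps)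
  have "(a2 - k * m = a1 \<and> e2 - k * m = e1) \<or> (e1 - a1) + (e2 - a2) + 2 \<le> m - 4 \<or>
        ((e1 - a1) + (e2 - a2) + 2 = m - 2 \<and> a2 - k * m = e1 + 2)"
    using two_zero_runs_in_period[OF per even zero1 ends1 run1 zero2' ends2' _ window] run2
    by simp
  then show ?thesis
  proof (elim disjE)
    assume "(e1 - a1) + (e2 - a2) + 2 = m - 2 \<and> a2 - k * m = e1 + 2"
    then show ?thesis
      by (metis add_diff_cancel_left' diff_diff_eq diff_eq_eq dvd_triv_right)
  qed (auto simp: algebra_simps)
qed

section \<open>Two overlapping periodic windows\<close>

(* f, P, Q are the periodic extensions of s, of take d1 s and of take d2 (R^b s), the last one
   shifted back by b; the assumptions are what the hypotheses on s and R^b s say about them. *)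
locale periodic_windows =
  fixes f P Q :: "int \<Rightarrow> bool" and n c d1 d2 t1 t2 b :: int
  assumes n_eq: "n = c + d1"
    and d2_pos: "0 < d2" and d2_le_d1: "d2 \<le> d1" and d1_le_c: "d1 \<le> c"
    and b_pos: "0 < b" and b_less_n: "b < n"
    and t1_nonneg: "0 \<le> t1" and t1_le_t2: "t1 \<le> t2"
    and d1_d2_bound: "d1 + d2 \<le> c + t1 + t2 + 1"
    and f_periodic: "\<forall>i. f i = f (i mod n)"
    and P_periodic: "\<forall>i. P i = P (i mod d1)"
    and Q_periodic: "\<forall>i. Q i = Q (i mod d2)"
    and P_primitive: "\<And>r. (\<And>i. P i = P (i + r)) \<Longrightarrow> d1 dvd r"
    and f_eq_P: "\<And>i. -t1 \<le> i \<Longrightarrow> i \<le> n - 2 \<Longrightarrow> f i = P i"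
    and f_neq_P_right: "f (n - 1) \<noteq> P (n - 1)"
    and f_neq_P_left: "f (-t1 - 1) \<noteq> P (-t1 - 1)"
    and f_eq_Q: "\<And>i. -b - t2 \<le> i \<Longrightarrow> i \<le> c + d2 - 2 - b \<Longrightarrow> f i = Q i"
    and f_neq_Q_right: "f (c + d2 - 1 - b) \<noteq> Q (c + d2 - 1 - b)"
    and f_neq_Q_left: "f (-b - t2 - 1) \<noteq> Q (-b - t2 - 1)"
begin

definition jump_f :: "int \<Rightarrow> bool" where
  "jump_f i \<longleftrightarrow> f i \<noteq> f (i + d2)"

definition jump_P :: "int \<Rightarrow> bool" where
  "jump_P i \<longleftrightarrow> P i \<noteq> P (i + d2)"

lemma n_pos: "0 < n" and d1_pos: "0 < d1"
  using n_eq d2_pos d2_le_d1 d1_le_c by auto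

lemma jump_f_periodic: "\<forall>i. jump_f i = jump_f (i mod n)"
  using periodic_changes[OF f_periodic] unfolding jump_f_def by blast

lemma jump_P_periodic: "\<forall>i. jump_P i = jump_P (i mod d1)"
  using periodic_changes[OF P_periodic] unfolding jump_P_def by blast

lemma jump_f_even: "even (card {i \<in> {a..<a+n}. jump_f i})"
  using even_card_shift_changes[OF n_pos f_periodic] unfolding jump_f_def .

lemma jump_P_even: "even (card {i \<in> {a..<a+d1}. jump_P i})"
  using even_card_shift_changes[OF d1_pos P_periodic] unfolding jump_P_def .

lemma jump_f_minus_n: "jump_f (i - n) = jump_f i"
  using periodic_add_mult[OF jump_f_periodic, of i "-1"] by simp

lemma P_add_d1: "P (i + d1) = P i"
  using periodic_add_mult[OF P_periodic, of i 1] by simp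

lemma Q_add_d2: "Q (i + d2) = Q i"
  using periodic_add_mult[OF Q_periodic, of i 1] by simp

lemma f_add_n: "f (i + n) = f i"
  using periodic_add_mult[OF f_periodic, of i 1] by simp

lemma not_jump_f: "-b - t2 \<le> i \<Longrightarrow> i \<le> c - 2 - b \<Longrightarrow> \<not> jump_f i"
  using f_eq_Q[of i] f_eq_Q[of "i + d2"] Q_add_d2[of i] d2_pos
  unfolding jump_f_def by simp

lemma jump_f_left: "jump_f (-b - t2 - 1)"
proof -
  have "f (-b - t2 - 1 + d2) = Q (-b - t2 - 1 + d2)"
    using d2_pos d1_le_c d1_pos t1_nonneg t1_le_t2 by (intro f_eq_Q) linarith+
  then show ?thesis
    using f_neq_Q_left Q_add_d2[of "-b - t2 - 1"]
    unfolding jump_f_def by simp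
qed

lemma jump_f_right: "jump_f (c - 1 - b)"
proof -
  have "f (c - 1 - b) = Q (c - 1 - b)"
    using d2_pos t1_nonneg t1_le_t2 d1_le_c d1_pos by (intro f_eq_Q) linarith+
  then show ?thesis
    using f_neq_Q_right Q_add_d2[of "c - 1 - b"]
    unfolding jump_f_def by (simp add: algebra_simps)
qed

lemma jump_f_eq_jump_P: "-t1 \<le> i \<Longrightarrow> i \<le> n - 2 - d2 \<Longrightarrow> jump_f i = jump_P i"
  using f_eq_P[of i] f_eq_P[of "i + d2"] d2_pos unfolding jump_f_def jump_P_def by simp

lemma jump_f_neq_jump_P_left: "jump_f (-t1 - 1) \<noteq> jump_P (-t1 - 1)"
proof -
  have "f (-t1 - 1 + d2) = P (-t1 - 1 + d2)"
    using n_eq d2_pos d2_le_d1 d1_le_c t1_nonneg by (intro f_eq_P) linarith+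
  then show ?thesis
    using f_neq_P_left unfolding jump_f_def jump_P_def by auto
qed

lemma jump_f_neq_jump_P_right: "jump_f (n - 1 - d2) \<noteq> jump_P (n - 1 - d2)"
proof -
  have "f (n - 1 - d2) = P (n - 1 - d2)"
    using n_eq d2_pos d2_le_d1 d1_le_c t1_nonneg by (intro f_eq_P) linarith+
  then show ?thesis
    using f_neq_P_right unfolding jump_f_def jump_P_def by auto
qed

lemma not_jump_P:
  assumes "-t1 \<le> i" "i \<le> n - 2 - d2"
    and "-b - t2 \<le> i \<and> i \<le> c - 2 - b \<or> -b - t2 \<le> i - n \<and> i - n \<le> c - 2 - b"
  shows "\<not> jump_P i"
  using assms jump_f_eq_jump_P not_jump_f jump_f_minus_n by metis

lemma t2_less_d1: "t2 < d1"
proof (rule ccontr)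
  assume "\<not> t2 < d1"
  have "f k = f (k + d2)" for k
    by (rule shift_eq_if_eq_on_window_but_one[OF n_pos f_periodic,
          where a = "-b - t2" and j = "-b - t2 + n - 1"])
      (use not_jump_f n_eq \<open>\<not> t2 < d1\<close> in \<open>auto simp: jump_f_def\<close>)
  then show False
    using jump_f_left unfolding jump_f_def by simp
qed

lemma b_eq_d2_if_d2_eq_d1:
  assumes "d2 = d1"
  shows "b = d2"
proof -
  have no_jump_P: "\<not> jump_P i" for i
    using P_add_d1[of i] assms unfolding jump_P_def by simp
  have zero1: "\<forall>i \<in> {-t1..n - 2 - d2}. \<not> jump_f i"
    using jump_f_eq_jump_P no_jump_P by simp
  have zero2: "\<forall>i \<in> {-b - t2..c - 2 - b}. \<not> jump_f i"
    using not_jump_f by simp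
  have ends1: "jump_f (-t1 - 1)" "jump_f (n - 2 - d2 + 1)"
    using jump_f_neq_jump_P_left jump_f_neq_jump_P_right no_jump_P
    by (simp_all add: algebra_simps)
  have ends2: "jump_f (-b - t2 - 1)" "jump_f (c - 2 - b + 1)"
    using jump_f_left jump_f_right by (simp_all add: algebra_simps)
  have runs: "-t1 \<le> n - 2 - d2 + 1" "-b - t2 \<le> c - 2 - b + 1"
    using n_eq assms t1_nonneg t1_le_t2 d1_le_c d1_pos by linarith+
  from two_zero_runs[OF n_pos jump_f_periodic jump_f_even zero1 ends1 runs(1) zero2 ends2 runs(2)]
  show ?thesis
  proof (elim disjE exE conjE)
    fix k
    assume "-b - t2 = -t1 + k * n" "c - 2 - b - (-b - t2) = n - 2 - d2 - -t1"
    then have "b = (-k) * n"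
      using n_eq assms by (simp add: algebra_simps)
    then show ?thesis
      using b_pos b_less_n zdvd_imp_le by (metis dvd_triv_right not_le)
  qed (use n_eq assms t1_nonneg t1_le_t2 d1_le_c d1_d2_bound b_pos b_less_n in linarith)+
qed

context
  assumes d2_less_d1: "d2 < d1"
begin

lemma jump_P_zero_run_short:
  assumes zero: "\<forall>i \<in> {a..e}. \<not> jump_P i"
  shows "e - a + 2 < d1"
proof (rule ccontr)
  assume "\<not> e - a + 2 < d1"
  have "P k = P (k + d2)" for k
    by (rule shift_eq_if_eq_on_window_but_one[OF d1_pos P_periodic, where a = a and j = "a + d1 - 1"])
      (use zero \<open>\<not> e - a + 2 < d1\<close> in \<open>auto simp: jump_P_def\<close>)
  then have "d1 dvd d2"
    by (rule P_primitive)
  then show False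
    using d2_pos d2_less_d1 zdvd_imp_le by fastforce
qed

lemma b_less_c_d2: "b < c + d2"
proof (rule ccontr)
  assume b: "\<not> b < c + d2"
  consider "-t1 \<le> n - b - t2" | "n - b - t2 < -t1"
    by linarith
  then show False
  proof cases
    case 1
    have "(n + c - 2 - b) - (n - b - t2) + 2 < d1"
      using 1 b by (intro jump_P_zero_run_short ballI not_jump_P) auto
    then show False
      using d1_le_c t1_nonneg t1_le_t2 by linarith
  next
    case 2
    have "(n + c - 2 - b) - (-t1) + 2 < d1"
      using 2 b by (intro jump_P_zero_run_short ballI not_jump_P) auto
    then show False
      using d1_le_c t1_nonneg b_less_n by linarith
  qed
qed

lemma b_t2_le_n_t1: "b + t2 \<le> n + t1"
proof (rule ccontr)
  assume "\<not> b + t2 \<le> n + t1"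
  then have "(n - 2 - d2) - (-t1) + 2 < d1"
    using b_less_c_d2 by (intro jump_P_zero_run_short ballI not_jump_P) auto
  then show False
    using n_eq d2_le_d1 d1_le_c t1_nonneg by linarith
qed

lemma not_jump_P_right: "\<forall>i \<in> {-t1..c - 2 - b}. \<not> jump_P i"
  using b_pos t1_le_t2 n_eq d2_le_d1 by (intro ballI not_jump_P) auto

lemma not_jump_P_left: "\<forall>i \<in> {n - b - t2..n - 2 - d2}. \<not> jump_P i"
  using b_t2_le_n_t1 b_less_c_d2 by (intro ballI not_jump_P) auto

lemma c_t1_less_b_d1: "c + t1 < b + d1"
  using jump_P_zero_run_short[OF not_jump_P_right] by linarith

lemma b_t2_less_d1_d2: "b + t2 < d1 + d2"
  using jump_P_zero_run_short[OF not_jump_P_left] by linarith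

lemma b_less_c_t1: "b < c + t1"
proof (rule ccontr)
  assume "\<not> b < c + t1"
  then have b: "b = c + t1"
    using b_t2_less_d1_d2 d1_d2_bound by linarith
  have f_eq_Q_back: "f i = Q (i - c)" if "-t1 \<le> i" "i \<le> d2 - 1 - t1" for i
  proof -
    have "f i = P i"
      using that n_eq d2_less_d1 d1_le_c t1_nonneg by (intro f_eq_P) linarith+
    also have "\<dots> = P (i + d1)"
      by (rule P_add_d1[symmetric])
    also have "\<dots> = f (i + d1)"
      using that n_eq d2_less_d1 d1_le_c t1_nonneg by (intro f_eq_P[symmetric]) linarith+
    also have "\<dots> = f (i - c)"
      using f_add_n[of "i - c"] n_eq by simp
    also have "\<dots> = Q (i - c)"
      using that b t1_nonneg t1_le_t2 d1_pos d1_le_c by (intro f_eq_Q) linarith+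
    finally show ?thesis .
  qed
  have Q_shift: "Q k = Q (k + - c)" for k
  proof (rule shift_eq_if_eq_on_window_but_one[OF d2_pos Q_periodic,
        where a = "-t1" and j = "d2 - 1 - t1"], intro ballI)
    fix i
    assume "i \<in> {-t1..<-t1 + d2} - {d2 - 1 - t1}"
    then have i: "-t1 \<le> i" "i \<le> d2 - 2 - t1"
      by auto
    then have "Q i = f i"
      using b t1_nonneg t1_le_t2 d1_pos d1_le_c by (intro f_eq_Q[symmetric]) linarith+
    also have "\<dots> = Q (i + - c)"
      using f_eq_Q_back[of i] i by simp
    finally show "Q i = Q (i + - c)" .
  qed
  have "f (d2 - 1 - t1) = Q (d2 - 1 - t1)"
    using f_eq_Q_back[of "d2 - 1 - t1"] Q_shift[of "d2 - 1 - t1"] t1_nonneg d2_pos by simp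
  moreover have "c + d2 - 1 - b = d2 - 1 - t1"
    using b by simp
  ultimately show False
    using f_neq_Q_right by metis
qed

lemma d2_less_b_t2: "d2 < b + t2"
proof (rule ccontr)
  assume "\<not> d2 < b + t2"
  then have b: "b + t2 = d2"
    using c_t1_less_b_d1 d1_d2_bound by linarith
  have f_eq_Q_fwd: "f i = Q (i + c)" if "-d2 - 1 \<le> i" "i \<le> -2" for i
  proof -
    have "f i = f (i + n)"
      by (rule f_add_n[symmetric])
    also have "\<dots> = P (i + n)"
      using that n_eq d2_less_d1 d1_le_c t1_nonneg by (intro f_eq_P) linarith+
    also have "\<dots> = P (i + c)"
      using P_add_d1[of "i + c"] n_eq by (simp add: algebra_simps)
    also have "\<dots> = f (i + c)"
      using that n_eq d2_less_d1 d1_le_c t1_nonneg by (intro f_eq_P[symmetric]) linarith+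
    also have "\<dots> = Q (i + c)"
      using that b t1_le_t2 t1_nonneg d1_pos d1_le_c by (intro f_eq_Q) linarith+
    finally show ?thesis .
  qed
  have Q_shift: "Q k = Q (k + c)" for k
  proof (rule shift_eq_if_eq_on_window_but_one[OF d2_pos Q_periodic, where a = "-d2" and j = "-1"],
        intro ballI)
    fix i
    assume "i \<in> {-d2..<-d2 + d2} - {-1}"
    then have i: "-d2 \<le> i" "i \<le> -2"
      by auto
    then have "Q i = f i"
      using b t1_nonneg t1_le_t2 d1_pos d1_le_c by (intro f_eq_Q[symmetric]) linarith+
    also have "\<dots> = Q (i + c)"
      using f_eq_Q_fwd[of i] i by simp
    finally show "Q i = Q (i + c)" .
  qed
  have "f (-d2 - 1) = Q (-d2 - 1)"
    using f_eq_Q_fwd[of "-d2 - 1"] Q_shift[of "-d2 - 1"] d2_pos by simp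
  moreover have "-b - t2 - 1 = -d2 - 1"
    using b by simp
  ultimately show False
    using f_neq_Q_left by metis
qed

lemma jump_P_around_right: "jump_P (-t1 - 1)" "jump_P (c - 2 - b + 1)"
proof -
  show "jump_P (-t1 - 1)"
    using jump_f_neq_jump_P_left not_jump_f[of "-t1 - 1"] b_pos t1_le_t2 b_less_c_t1 by auto
  have "jump_f (c - 1 - b) = jump_P (c - 1 - b)"
    using b_less_c_t1 n_eq d2_le_d1 b_pos by (intro jump_f_eq_jump_P) linarith+
  then show "jump_P (c - 2 - b + 1)"
    using jump_f_right by (simp add: algebra_simps)
qed

lemma not_jump_f_minus_1_d2: "\<not> jump_f (-1 - d2)"
  using d2_less_b_t2 b_less_c_d2 by (intro not_jump_f) linarith+

lemma jump_P_around_left: "jump_P (n - b - t2 - 1)" "jump_P (n - 2 - d2 + 1)"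
proof -
  show "jump_P (n - b - t2 - 1)"
  proof (cases "-t1 \<le> n - b - t2 - 1")
    case True
    then have "jump_P (n - b - t2 - 1) = jump_f (n - b - t2 - 1)"
      using d2_less_b_t2 by (intro jump_f_eq_jump_P[symmetric]) linarith+
    also have "\<dots> = jump_f (n - b - t2 - 1 - n)"
      by (rule jump_f_minus_n[symmetric])
    also have "n - b - t2 - 1 - n = -b - t2 - 1"
      by simp
    finally show ?thesis
      using jump_f_left by simp
  next
    case False
    then have "n - b - t2 - 1 = -t1 - 1"
      using b_t2_le_n_t1 by linarith
    then show ?thesis
      using jump_P_around_right(1) by metis
  qed
  show "jump_P (n - 2 - d2 + 1)"
    using not_jump_f_minus_1_d2 jump_f_neq_jump_P_right jump_f_minus_n[of "n - 1 - d2"]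
    by (simp add: algebra_simps)
qed

lemma b_eq_d2_if_d2_less_d1: "b = d2"
proof -
  have runs: "-t1 \<le> c - 2 - b + 1" "n - b - t2 \<le> n - 2 - d2 + 1"
    using b_less_c_t1 d2_less_b_t2 by linarith+
  from two_zero_runs[OF d1_pos jump_P_periodic jump_P_even not_jump_P_right jump_P_around_right
      runs(1) not_jump_P_left jump_P_around_left runs(2)]
  show ?thesis
  proof (elim disjE exE conjE)
    fix k
    assume "n - b - t2 = -t1 + k * d1" "n - 2 - d2 - (n - b - t2) = c - 2 - b - -t1"
    then have b: "b = d2 - d1 + k * d1"
      using n_eq by linarith
    then have "0 < k * d1" "k * d1 < 2 * d1"
      using b_pos d2_le_d1 b_t2_less_d1_d2 t1_nonneg t1_le_t2 by linarith+
    then have "0 < k" "k < 2"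
      using d1_pos by (simp_all add: zero_less_mult_iff)
    then have "k = 1"
      by simp
    with b show ?thesis
      by simp
  next
    assume adjacent: "c - 2 - b - -t1 + (n - 2 - d2 - (n - b - t2)) + 2 = d1 - 2"
      "d1 dvd n - b - t2 - (c - 2 - b) - 2"
    have "n - b - t2 - (c - 2 - b) - 2 = d1 - t2"
      using n_eq by linarith
    with adjacent(2) have "d1 dvd d1 - (d1 - t2)"
      by (metis dvd_diff dvd_refl)
    then have "d1 dvd t2"
      by simp
    then have "t2 = 0"
      using zdvd_imp_le[of d1 t2] t2_less_d1 t1_nonneg t1_le_t2 by linarith
    then have t1: "t1 = 0" and c: "c = d1 + d2"
      using adjacent(1) t1_nonneg t1_le_t2 by linarith+
    have "f (-1 - d2) = f (-1 - d2 + n)"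
      by (rule f_add_n[symmetric])
    also have "\<dots> = P (-1 - d2 + n)"
      using n_eq d2_pos d2_le_d1 d1_le_c t1 by (intro f_eq_P) linarith+
    also have "-1 - d2 + n = -1 + 2 * d1"
      using c n_eq by simp
    also have "P (-1 + 2 * d1) = P (-1)"
      by (rule periodic_add_mult[OF P_periodic])
    finally have "jump_f (-1 - d2)"
      using f_neq_P_left t1 unfolding jump_f_def by simp
    with not_jump_f_minus_1_d2 show ?thesis
      by simp
  qed (use d1_d2_bound in linarith)
qed

end

lemma b_eq_d2: "b = d2"
  using b_eq_d2_if_d2_eq_d1 b_eq_d2_if_d2_less_d1 d2_le_d1 by fastforce

end

section \<open>Words and the sets B(n,c,d)\<close>

definition periodic_ext :: "nat \<Rightarrow> 'a list \<Rightarrow> int \<Rightarrow> 'a" where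
  "periodic_ext m w i = w ! nat (i mod int m)"

lemma periodic_ext_periodic: "\<forall>i. periodic_ext m w i = periodic_ext m w (i mod int m)"
  by (simp add: periodic_ext_def)

lemma periodic_ext_of_nat: "periodic_ext m w (int i) = w ! (i mod m)"
  by (simp add: periodic_ext_def flip: of_nat_mod)

lemma periodic_ext_neg:
  assumes "k < m"
  shows "periodic_ext m w (-int k - 1) = w ! (m - 1 - k)"
proof -
  have "(-int k - 1) mod int m = (-int k - 1 + int m) mod int m"
    by simp
  also have "\<dots> = -int k - 1 + int m"
    using assms by (intro mod_pos_pos_trivial) linarith+
  finally have "(-int k - 1) mod int m = int (m - 1 - k)"
    using assms by simp
  then show ?thesis
    by (simp add: periodic_ext_def)
qed

lemma periodic_ext_take:
  "0 < m \<Longrightarrow> m \<le> length w \<Longrightarrow> periodic_ext m (take m w) = periodic_ext m w"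
  by (simp add: periodic_ext_def fun_eq_iff nat_less_iff)

lemma nth_concat_replicate:
  "i < q * length p \<Longrightarrow> concat (replicate q p) ! i = p ! (i mod length p)"
proof (induction q arbitrary: i)
  case 0
  then show ?case by simp
next
  case (Suc q)
  show ?case
  proof (cases "i < length p")
    case True
    then show ?thesis by (simp add: nth_append)
  next
    case False
    then have "concat (replicate q p) ! (i - length p) = p ! ((i - length p) mod length p)"
      using Suc by (intro Suc.IH) auto
    moreover have "(i - length p) mod length p = i mod length p"
      using False by (simp add: le_mod_geq)
    ultimately show ?thesis
      using False by (simp add: nth_append)
  qed
qed

lemma periodic_if_periodic_ext_shift:
  assumes e: "0 < e" "e < length w" "e dvd length w"
    and shift: "\<And>i. periodic_ext (length w) w (i + int e) = periodic_ext (length w) w i"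
  shows "periodic w"
  unfolding periodic_def
proof (intro exI conjI)
  show "w = concat (replicate (length w div e) (take e w))"
  proof (rule nth_equalityI)
    show "length w = length (concat (replicate (length w div e) (take e w)))"
      using e by (simp add: length_concat sum_list_replicate)
  next
    fix i
    assume i: "i < length w"
    have "w ! i = periodic_ext (length w) w (int (i mod e) + int (i div e) * int e)"
      using i by (simp add: periodic_ext_of_nat flip: of_nat_mult of_nat_add)
    also have "\<dots> = periodic_ext (length w) w (int (i mod e))"
      using shift_invariant_add_mult[where h = "periodic_ext (length w) w", OF shift] by simp
    also have "\<dots> = w ! (i mod e)"
      using e mod_less_divisor[of e i] by (simp add: periodic_ext_of_nat less_trans[of _ e])
    also have "\<dots> = concat (replicate (length w div e) (take e w)) ! i"
      using i e by (simp add: nth_concat_replicate)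
    finally show "w ! i = concat (replicate (length w div e) (take e w)) ! i" .
  qed
qed (use e in auto)

lemma aperiodic_take_shift_dvd:
  assumes ap: "aperiodic (take d w)" and d: "0 < d" "d \<le> length w"
    and shift: "\<And>i. periodic_ext d w i = periodic_ext d w (i + r)"
  shows "int d dvd r"
proof (rule ccontr)
  assume not_dvd: "\<not> int d dvd r"
  let ?v = "take d w"
  have v: "length ?v = d" "periodic_ext d ?v = periodic_ext d w"
    using d periodic_ext_take[of d w] by auto
  define g where "g = gcd (int d) r"
  obtain x y where bezout: "x * int d + y * r = g"
    unfolding g_def using bezout_int by blast
  have shift_g: "periodic_ext d ?v (i + g) = periodic_ext d ?v i" for i
  proof -
    have "periodic_ext d w ((i + y * r) + x * int d) = periodic_ext d w (i + y * r)"
      using periodic_ext_periodic by (rule periodic_add_mult)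
    also have "\<dots> = periodic_ext d w i"
      using shift by (intro shift_invariant_add_mult) metis
    finally show ?thesis
      using v(2) bezout by (simp add: algebra_simps)
  qed
  have "0 < g" "g dvd int d"
    using d unfolding g_def by simp_all
  moreover have "g \<noteq> int d"
    using not_dvd unfolding g_def by (metis gcd_dvd2)
  ultimately have "0 < nat g" "nat g < d" "nat g dvd d"
    using zdvd_imp_le[of g "int d"] d by (auto simp: nat_dvd_iff)
  then have "periodic ?v"
    using v(1) shift_g by (intro periodic_if_periodic_ext_shift[of "nat g"]) auto
  with ap show False
    unfolding aperiodic_def by simp
qed

lemma rshift_nth:
  assumes "b \<le> length s" "i < length s"
  shows "rshift b s ! i = s ! ((i + length s - b) mod length s)"
proof (cases "i < b")
  case True
  then show ?thesis
    using assms by (simp add: rshift_def nth_append ac_simps)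
next
  case False
  then have "(i + length s - b) mod length s = i - b"
    using assms by (metis add_diff_assoc2 mod_add_self2 mod_less not_le less_imp_diff_less)
  then show ?thesis
    using False assms by (simp add: rshift_def nth_append)
qed

lemma periodic_ext_rshift:
  assumes b: "b \<le> length s" and s: "0 < length s"
  shows "periodic_ext (length s) (rshift b s) (i + int b) = periodic_ext (length s) s i"
proof -
  let ?n = "length s"
  define m where "m = nat ((i + int b) mod int ?n)"
  have m: "int m = (i + int b) mod int ?n" "m < ?n"
    unfolding m_def using s by (simp_all add: nat_less_iff)
  have "int ((m + ?n - b) mod ?n) = (int m + int ?n - int b) mod int ?n"
    using b by (simp add: of_nat_mod)
  also have "\<dots> = ((i + int b) mod int ?n + (int ?n - int b)) mod int ?n"
    unfolding m(1) by (simp add: add_diff_eq)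
  also have "\<dots> = i mod int ?n"
    by (simp add: mod_add_left_eq)
  finally have "(m + ?n - b) mod ?n = nat (i mod int ?n)"
    by (metis nat_int)
  then show ?thesis
    using rshift_nth[OF b m(2)] unfolding periodic_ext_def m_def[symmetric] by simp
qed

lemma Bset_memD:
  assumes "w \<in> Bset n c d"
  shows "length w = n" "0 < d" "c + d \<le> n" "aperiodic (take d w)"
    and "\<And>i. i < c + d - 1 \<Longrightarrow> w ! i = w ! (i mod d)"
    and "w ! (c + d - 1) \<noteq> w ! ((c + d - 1) mod d)"
proof -
  define q where "q = (c + d - 1) div d"
  define r where "r = c + d - 1 - q * d"
  have basic: "length w = n" "0 < d" "c + d \<le> n" "aperiodic (take d w)"
    and prefix: "take (c + d) w = concat (replicate q (take d w)) @ take r w @ [\<not> w ! r]"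
    using assms unfolding Bset_def q_def r_def Let_def by auto
  then show "length w = n" "0 < d" "c + d \<le> n" "aperiodic (take d w)"
    by auto
  have r: "r = (c + d - 1) mod d" "q * d + r = c + d - 1"
    unfolding r_def q_def by (simp_all add: minus_div_mult_eq_mod)
  then have "r < d"
    using basic(2) by simp
  have len: "length (concat (replicate q (take d w))) = q * d"
    using basic by (simp add: length_concat sum_list_replicate)
  have prefix_nth: "w ! i = (concat (replicate q (take d w)) @ take r w @ [\<not> w ! r]) ! i"
    if "i < c + d" for i
    using that by (simp flip: prefix)
  show "w ! i = w ! (i mod d)" if i: "i < c + d - 1" for i
  proof (cases "i < q * d")
    case True
    then show ?thesis
      using prefix_nth[of i] i len basic by (simp add: nth_append nth_concat_replicate)
  next
    case False
    then have "i mod d = (i - q * d + q * d) mod d"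
      by simp
    also have "\<dots> = i - q * d"
      using i r \<open>r < d\<close> by simp
    finally have "i mod d = i - q * d" .
    moreover have "i - q * d < r"
      using i r(2) False by linarith
    ultimately show ?thesis
      using prefix_nth[of i] i len False \<open>r < d\<close> basic(1,3) by (simp add: nth_append)
  qed
  have "w ! (c + d - 1) = (concat (replicate q (take d w)) @ take r w @ [\<not> w ! r]) ! (q * d + r)"
    using prefix_nth[of "c + d - 1"] r(2) basic(2) by simp
  also have "\<dots> = (\<not> w ! r)"
    using len \<open>r < d\<close> basic(1,3) by (simp add: nth_append)
  finally show "w ! (c + d - 1) \<noteq> w ! ((c + d - 1) mod d)"
    using r(1) by simp
qed

lemma Bset_border:
  assumes B: "w \<in> Bset n c d" and add: "is_add d w t"
  shows "\<And>i. -int t \<le> i \<Longrightarrow> i \<le> int c + int d - 2 \<Longrightarrow>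
      periodic_ext n w i = periodic_ext d w i"
    and "periodic_ext n w (int c + int d - 1) \<noteq> periodic_ext d w (int c + int d - 1)"
    and "periodic_ext n w (-int t - 1) \<noteq> periodic_ext d w (-int t - 1)"
proof -
  note w = Bset_memD[OF B]
  have t: "t < n"
    using add w(1) unfolding is_add_def by simp
  have mod_d: "(int d - 1 - x) mod int d = (-x - 1) mod int d" for x
  proof -
    have "int d - 1 - x = (-x - 1) + 1 * int d"
      by simp
    then show ?thesis
      by (simp only: mod_mult_self1)
  qed
  have add_nth: "w ! (n - 1 - k) = periodic_ext d w (-int k - 1)" if "k < t" for k
    using add that w(1) mod_d unfolding is_add_def periodic_ext_def by simp
  show "periodic_ext n w i = periodic_ext d w i" if i: "-int t \<le> i" "i \<le> int c + int d - 2" for i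
  proof (cases "0 \<le> i")
    case True
    then have "nat i < c + d - 1" "nat i < n"
      using i w(3) by linarith+
    then show ?thesis
      using w(5)[of "nat i"] True by (simp add: periodic_ext_def nat_mod_distrib)
  next
    case False
    define k where "k = nat (-i - 1)"
    have k: "k < t" "i = -int k - 1"
      unfolding k_def using False i by auto
    then show ?thesis
      using add_nth[OF k(1)] periodic_ext_neg[of k n w] t by simp
  qed
  have last: "int c + int d - 1 = int (c + d - 1)"
    using w(2) by simp
  show "periodic_ext n w (int c + int d - 1) \<noteq> periodic_ext d w (int c + int d - 1)"
    unfolding last periodic_ext_of_nat using w(2,3,6) by simp
  have "periodic_ext n w (-int t - 1) = w ! (n - 1 - t)"
    using periodic_ext_neg[OF t] .
  then show "periodic_ext n w (-int t - 1) \<noteq> periodic_ext d w (-int t - 1)"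
    using add w(1) mod_d unfolding is_add_def periodic_ext_def by simp
qed

lemma Bset_border_rshift:
  assumes B: "rshift b s \<in> Bset n c d" and add: "is_add d (rshift b s) t" and b: "b \<le> n"
  shows "\<And>i. -int b - int t \<le> i \<Longrightarrow> i \<le> int c + int d - 2 - int b \<Longrightarrow>
      periodic_ext n s i = periodic_ext d (rshift b s) (i + int b)"
    and "periodic_ext n s (int c + int d - 1 - int b)
      \<noteq> periodic_ext d (rshift b s) (int c + int d - 1 - int b + int b)"
    and "periodic_ext n s (-int b - int t - 1)
      \<noteq> periodic_ext d (rshift b s) (-int b - int t - 1 + int b)"
proof -
  note u = Bset_memD[OF B]
  have "length s = n" "0 < n"
    using u(1-3) by (simp_all add: rshift_def)
  then have shifted: "periodic_ext n s i = periodic_ext n (rshift b s) (i + int b)" for i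
    using periodic_ext_rshift[of b s i] b by simp
  note border = Bset_border[OF B add]
  show "periodic_ext n s i = periodic_ext d (rshift b s) (i + int b)"
    if "-int b - int t \<le> i" "i \<le> int c + int d - 2 - int b" for i
    using border(1)[of "i + int b"] shifted[of i] that by simp
  show "periodic_ext n s (int c + int d - 1 - int b)
      \<noteq> periodic_ext d (rshift b s) (int c + int d - 1 - int b + int b)"
    using border(2) shifted[of "int c + int d - 1 - int b"] by simp
  show "periodic_ext n s (-int b - int t - 1)
      \<noteq> periodic_ext d (rshift b s) (-int b - int t - 1 + int b)"
    using border(3) shifted[of "-int b - int t - 1"] by simp
qed

theorem lemma7:
  fixes n c b d1 d2 t1 t2 :: nat and s :: "bool list"
  assumes "n \<le> 2 * c"
    and "d1 = n - c"
    and "s \<in> Bset n c d1"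
    and "is_add d1 s t1"
    and "0 < b" and "b < n"
    and "rshift b s \<in> Bset n c d2"
    and "is_add d2 (rshift b s) t2"
    and "t1 \<le> t2"
    and "d1 + d2 \<le> c + t2 + t1 + 1"
  shows "b = d2"
proof -
  let ?u = "rshift b s"
  note s = Bset_memD[OF assms(3)] and u = Bset_memD[OF assms(7)]
  have n: "n = c + d1"
    using s(3) assms(2) by simp
  interpret periodic_windows
    "periodic_ext n s" "periodic_ext d1 s" "\<lambda>i. periodic_ext d2 ?u (i + int b)"
    "int n" "int c" "int d1" "int d2" "int t1" "int t2" "int b"
  proof unfold_locales
    show "int d1 dvd r" if "\<And>i. periodic_ext d1 s i = periodic_ext d1 s (i + r)" for r
      using aperiodic_take_shift_dvd[OF s(4) s(2) _ that] s(1,3) by simp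
  qed (use assms(1,5,6,9,10) n u(2,3) Bset_border[OF assms(3,4)] Bset_border_rshift[OF assms(7,8)]
      in \<open>simp_all add: periodic_ext_def mod_add_left_eq\<close>)
  show ?thesis
    using b_eq_d2 by simp
qed

end
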